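(* Let $X_1,X_2,\ldots$ be i.i.d. with density $g(x;\Psi_0,\sigma_0)$, where $\Psi_0\in\boldsymbol{\Psi}_m$, $\sigma_0>0$, and assume $f(\cdot;0,1)$ satisfies Conditions C3 and C4. Let $a=(1+\beta)/(2\beta)$, $b=2(\beta+1)/(\beta-1)$ and $\epsilon_0=(3mbv_0/\sigma_0)^{-1/(1-a)}$. Then, with probability one, there exists $n_0$ such that for all $n\ge n_0$, $$\sup_{\mu\in\mathbb{R}}\sum_{i=1}^n I\big(|X_i-\mu|<\epsilon_0^{1-a}\big)\le \frac{n}{mb}.$$
   Context: Fix a positive integer $m$. Let $f(x;0,1)$ be a probability density on $\mathbb{R}$, $f(x;\mu,\sigma)=\sigma^{-1}f((x-\mu)/\sigma;0,1)$, $\boldsymbol{\Psi}_m=\{\sum_{j=1}^m\alpha_j I(\mu_j\le\mu):\alpha_j\ge0,\sum_j\alpha_j=1,\mu_j\in\mathbb{R}\}$, and $g(x;\Psi,\sigma)=\sum_{j=1}^m\alpha_j f(x;\mu_j,\sigma)$. (C3) There exist $v_0,v_1>0$ and $\beta>1$ such that $f(x;0,1)\le\min\{v_0,v_1|x|^{-\beta}\}$ for all $x$. (C4) $f(x;0,1)$ is continuous in $x$. The constants $v_0,\beta$ in the claim are those of C3; note $0<a<1$. *)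

theory Defs
  imports "HOL-Probability.Probability"
begin

definition locscale :: "(real \<Rightarrow> real) \<Rightarrow> real \<Rightarrow> real \<Rightarrow> real \<Rightarrow> real" where
  "locscale f0 x \<mu> \<sigma> = f0 ((x - \<mu>) / \<sigma>) / \<sigma>"

text \<open>Finite mixture g(x;Psi,sigma) = sum_{j=1}^m alpha_j f(x;mu_j,sigma), where the mixing
  distribution Psi = sum_j alpha_j I(mu_j <= mu) is given by weights alpha and support points mu.\<close>
definition mixdens :: "(real \<Rightarrow> real) \<Rightarrow> nat \<Rightarrow> (nat \<Rightarrow> real) \<Rightarrow> (nat \<Rightarrow> real) \<Rightarrow> real \<Rightarrow> real \<Rightarrow> real" where
  "mixdens f0 m \<alpha> \<mu> \<sigma> x = (\<Sum>j=1..m. \<alpha> j * locscale f0 x (\<mu> j) \<sigma>)"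

definition in_Psi_m :: "nat \<Rightarrow> (nat \<Rightarrow> real) \<Rightarrow> bool" where
  "in_Psi_m m \<alpha> \<longleftrightarrow> (\<forall>j\<in>{1..m}. \<alpha> j \<ge> 0) \<and> (\<Sum>j=1..m. \<alpha> j) = 1"

end

theory Submission imports Defs begin

text \<open>A density bounded by q gives every window of radius \<delta> probability at most 2\<delta>q, which
  for \<delta> = \<epsilon>0^(1-a) is 2/(3mb) < 1/(mb). The windows with centre in a large compact set lie
  in finitely many slightly longer grid intervals, still of probability below 1/(mb), and the
  remaining windows lie in a tail set of small probability. Hoeffding's inequality with
  Borel--Cantelli shows that almost surely each of these finitely many sets eventually holds at
  most n/(mb) of the first n observations, which bounds the supremum over all windows.\<close>

context prob_space
begin

lemma AE_eventually_sum_less_expectation: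
  fixes Z :: "nat \<Rightarrow> 'a \<Rightarrow> real"
  assumes ind: "indep_vars (\<lambda>_. borel) Z UNIV"
    and Z01: "\<And>i x. Z i x \<in> {0..1}" and t: "t > 0"
  shows "AE \<omega> in M. eventually (\<lambda>n.
           (\<Sum>i\<in>{1..n}. Z i \<omega>) < (\<Sum>i\<in>{1..n}. expectation (Z i)) + real n * t) sequentially"
proof -
  have [measurable]: "Z i \<in> borel_measurable M" for i
    using ind unfolding indep_vars_def by auto
  define A where "A n = {\<omega>\<in>space M.
      (\<Sum>i\<in>{1..n}. Z i \<omega>) \<ge> (\<Sum>i\<in>{1..n}. expectation (Z i)) + real n * t}" for n
  have A_sets[measurable]: "A n \<in> sets M" for n
    unfolding A_def by measurable
  have A_le: "measure M (A n) \<le> exp (-2 * t\<^sup>2) ^ n" for n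
  proof (cases "n = 0")
    case False
    interpret Hoeffding_ineq M "{1..n}" Z "\<lambda>_. 0" "\<lambda>_. 1" "\<Sum>i\<in>{1..n}. expectation (Z i)"
      by unfold_locales (use Z01 in \<open>auto intro: indep_vars_subset[OF ind]\<close>)
    have "measure M (A n) \<le> exp (-2 * (real n * t)\<^sup>2 / (\<Sum>i\<in>{1..n}. ((1::real) - 0)\<^sup>2))"
      unfolding A_def using Hoeffding_ineq_ge[of "real n * t"] False t by simp
    also have "\<dots> = exp (real n * (-2 * t\<^sup>2))"
      using False by (simp add: power2_eq_square field_simps)
    also have "\<dots> = exp (-2 * t\<^sup>2) ^ n"
      by (rule exp_of_nat_mult)
    finally show ?thesis .
  qed simp
  have "summable (\<lambda>n. exp (-2 * t\<^sup>2) ^ n)"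
    by (rule summable_geometric) (use t in simp)
  then have "summable (\<lambda>n. measure M (A n))"
    by (rule summable_comparison_test'[where N=0]) (use A_le in simp)
  then have "AE \<omega> in M. eventually (\<lambda>n. \<omega> \<in> space M - A n) sequentially"
    by (intro borel_cantelli_AE1) (auto simp: emeasure_eq_measure)
  then show ?thesis
    by (rule AE_mp) (auto simp: A_def not_le intro!: AE_I2 elim!: eventually_mono)
qed

lemma AE_eventually_card_le:
  fixes X :: "nat \<Rightarrow> 'a \<Rightarrow> real"
  assumes ind: "indep_vars (\<lambda>_. borel) X UNIV"
    and S: "S \<in> sets borel"
    and prob_le: "\<And>i. measure M (X i -` S \<inter> space M) \<le> p" and "p < c"
  shows "AE \<omega> in M. eventually (\<lambda>n. real (card {i\<in>{1..n}. X i \<omega> \<in> S}) \<le> real n * c) sequentially"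
proof -
  have [measurable]: "X i \<in> borel_measurable M" for i
    using ind unfolding indep_vars_def by auto
  define Z where "Z i \<omega> = (indicator S (X i \<omega>) :: real)" for i \<omega>
  have "indep_vars (\<lambda>_. borel) Z UNIV"
    unfolding Z_def by (rule indep_vars_compose2[OF ind]) (use S in auto)
  then have sum_less: "AE \<omega> in M. eventually (\<lambda>n.
      (\<Sum>i\<in>{1..n}. Z i \<omega>) < (\<Sum>i\<in>{1..n}. expectation (Z i)) + real n * (c - p)) sequentially"
    by (rule AE_eventually_sum_less_expectation) (use \<open>p < c\<close> in \<open>auto simp: Z_def\<close>)
  have "expectation (Z i) \<le> p" for i
  proof -
    have "expectation (Z i) = expectation (indicator (X i -` S \<inter> space M))"
      by (rule Bochner_Integration.integral_cong) (auto simp: Z_def indicator_def)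
    then show ?thesis
      using prob_le[of i] by (simp add: Int_assoc)
  qed
  then have expectation_le: "(\<Sum>i\<in>{1..n}. expectation (Z i)) \<le> real n * p" for n
    using sum_mono[of "{1..n}" "\<lambda>i. expectation (Z i)" "\<lambda>_. p"] by simp
  have card_eq: "real (card {i\<in>{1..n}. X i \<omega> \<in> S}) = (\<Sum>i\<in>{1..n}. Z i \<omega>)" for n \<omega>
    unfolding Z_def indicator_def by (simp add: sum.If_cases Int_def conj_commute)
  show ?thesis
    using sum_less
  proof (rule AE_mp, intro AE_I2 impI)
    fix \<omega>
    assume "eventually (\<lambda>n.
      (\<Sum>i\<in>{1..n}. Z i \<omega>) < (\<Sum>i\<in>{1..n}. expectation (Z i)) + real n * (c - p)) sequentially"
    then show "eventually (\<lambda>n. real (card {i\<in>{1..n}. X i \<omega> \<in> S}) \<le> real n * c) sequentially"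
    proof (rule eventually_mono)
      fix n
      assume "(\<Sum>i\<in>{1..n}. Z i \<omega>) < (\<Sum>i\<in>{1..n}. expectation (Z i)) + real n * (c - p)"
      then show "real (card {i\<in>{1..n}. X i \<omega> \<in> S}) \<le> real n * c"
        unfolding card_eq using expectation_le[of n] by (simp add: right_diff_distrib)
    qed
  qed
qed

lemma distributed_interval_le:
  assumes dist: "distributed M lborel Y (\<lambda>x. ennreal (g x))"
    and g_le: "\<And>x. g x \<le> q" and "q \<ge> 0" and "u \<le> v"
  shows "measure M (Y -` {u..v} \<inter> space M) \<le> q * (v - u)"
proof -
  have "emeasure M (Y -` {u..v} \<inter> space M) = (\<integral>\<^sup>+x. ennreal (g x) * indicator {u..v} x \<partial>lborel)"
    by (rule distributed_emeasure[OF dist]) simp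
  also have "\<dots> \<le> (\<integral>\<^sup>+x. ennreal q * indicator {u..v} x \<partial>lborel)"
    by (rule nn_integral_mono) (auto simp: indicator_def g_le intro: ennreal_leI)
  also have "\<dots> = ennreal (q * (v - u))"
    using assms by (simp add: nn_integral_cmult_indicator ennreal_mult[symmetric])
  finally show ?thesis
    using assms by (simp add: emeasure_eq_measure ennreal_le_iff)
qed

lemma distributed_measure_eq:
  assumes "distributed M N Y f" and "distributed M N Y' f" and "S \<in> sets N"
  shows "measure M (Y -` S \<inter> space M) = measure M (Y' -` S \<inter> space M)"
  using assms by (simp add: measure_def distributed_emeasure)

lemma tail_measure_less:
  fixes Y :: "'a \<Rightarrow> real"
  assumes [measurable]: "Y \<in> borel_measurable M" and "e > 0"
  obtains R where "measure M (Y -` {x. R < \<bar>x\<bar>} \<inter> space M) < e"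
proof -
  define D where "D n = Y -` {x. real n < \<bar>x\<bar>} \<inter> space M" for n :: nat
  have "(\<lambda>n. measure M (D n)) \<longlonglongrightarrow> measure M (\<Inter>n. D n)"
    by (rule Lim_measure_decseq) (auto simp: D_def decseq_def)
  moreover have "(\<Inter>n. D n) = {}"
  proof safe
    fix \<omega> assume "\<omega> \<in> (\<Inter>n. D n)"
    moreover obtain n :: nat where "\<bar>Y \<omega>\<bar> < real n"
      using reals_Archimedean2 by blast
    ultimately show "\<omega> \<in> {}"
      by (auto simp: D_def dest!: spec[of _ n])
  qed
  ultimately have "eventually (\<lambda>n. measure M (D n) < e) sequentially"
    using \<open>e > 0\<close> by (intro order_tendstoD(2)) auto
  then obtain n where "measure M (D n) < e"
    by (auto simp: eventually_sequentially)
  then show ?thesis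
    using that[of "real n"] by (simp add: D_def)
qed

end

lemma mixdens_le:
  assumes "in_Psi_m m \<alpha>" and "\<sigma> > 0" and f0_le: "\<And>x. f0 x \<le> v"
  shows "mixdens f0 m \<alpha> \<mu> \<sigma> x \<le> v / \<sigma>"
proof -
  have "mixdens f0 m \<alpha> \<mu> \<sigma> x \<le> (\<Sum>j=1..m. \<alpha> j * (v / \<sigma>))"
    unfolding mixdens_def
  proof (rule sum_mono)
    fix j assume "j \<in> {1..m}"
    then have "\<alpha> j \<ge> 0"
      using assms(1) by (simp add: in_Psi_m_def)
    moreover have "locscale f0 x (\<mu> j) \<sigma> \<le> v / \<sigma>"
      unfolding locscale_def using f0_le \<open>\<sigma> > 0\<close> by (simp add: divide_right_mono)
    ultimately show "\<alpha> j * locscale f0 x (\<mu> j) \<sigma> \<le> \<alpha> j * (v / \<sigma>)"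
      by (metis mult_left_mono)
  qed
  also have "\<dots> = v / \<sigma>"
    using assms(1) by (simp only: sum_distrib_right[symmetric]) (simp add: in_Psi_m_def)
  finally show ?thesis .
qed

lemma ball_subset_grid_interval:
  fixes h \<delta> \<mu> :: real
  assumes "h > 0"
  shows "{x. \<bar>x - \<mu>\<bar> < \<delta>} \<subseteq> {\<lfloor>\<mu> / h\<rfloor> * h - \<delta> .. \<lfloor>\<mu> / h\<rfloor> * h + h + \<delta>}"
proof -
  have "\<lfloor>\<mu> / h\<rfloor> * h \<le> \<mu>"
    using floor_divide_lower[OF assms] .
  moreover have "\<mu> < \<lfloor>\<mu> / h\<rfloor> * h + h"
    using floor_divide_upper[OF assms, of \<mu>] by (simp add: algebra_simps)
  ultimately show ?thesis
    by (auto simp: abs_less_iff)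
qed

lemma floor_divide_in_bounded_range:
  fixes h r \<mu> :: real
  assumes "h > 0" and "\<bar>\<mu>\<bar> < r"
  shows "\<lfloor>\<mu> / h\<rfloor> \<in> {-\<lceil>r / h\<rceil>..\<lceil>r / h\<rceil>}"
proof -
  have "\<bar>\<mu> / h\<bar> < r / h"
    unfolding abs_div_pos[OF assms(1), symmetric] using divide_strict_right_mono[OF assms(2,1)] .
  then have "\<lfloor>-(r / h)\<rfloor> \<le> \<lfloor>\<mu> / h\<rfloor>" and "\<lfloor>\<mu> / h\<rfloor> \<le> \<lfloor>r / h\<rfloor>"
    by (intro floor_mono; linarith)+
  moreover have "\<lfloor>-(r / h)\<rfloor> = -\<lceil>r / h\<rceil>"
    by (simp add: ceiling_def)
  ultimately show ?thesis
    by (auto intro: order.trans[OF _ floor_le_ceiling])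
qed

lemma (in prob_space) AE_eventually_window_count_le:
  fixes X :: "nat \<Rightarrow> 'a \<Rightarrow> real"
  assumes ind: "indep_vars (\<lambda>_. borel) X UNIV"
    and dist: "\<And>i. distributed M lborel (X i) (\<lambda>x. ennreal (g x))"
    and g_le: "\<And>x. g x \<le> q" and "q \<ge> 0" and "\<delta> > 0" and "2 * \<delta> * q < c"
  shows "AE \<omega> in M. \<exists>n0. \<forall>n\<ge>n0.
           (SUP \<mu>. real (card {i\<in>{1..n}. \<bar>X i \<omega> - \<mu>\<bar> < \<delta>})) \<le> real n * c"
proof -
  have [measurable]: "X i \<in> borel_measurable M" for i
    using ind unfolding indep_vars_def by auto
  define h where "h = (c - 2 * \<delta> * q) / (2 * (q + 1))"
  have "h > 0"
    using assms(4-6) by (simp add: h_def)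
  have "q * h \<le> (c - 2 * \<delta> * q) / 2"
    unfolding h_def using assms(4-6) by (simp add: field_simps)
  then have "q * (2 * \<delta> + h) < c"
    using assms(6) by (simp add: algebra_simps)
  have "c > 0"
    using assms(4-6) mult_nonneg_nonneg[of "2 * \<delta>" q] by linarith
  then obtain R where R: "measure M (X 0 -` {x. R < \<bar>x\<bar>} \<inter> space M) < c"
    using tail_measure_less[of "X 0" c] by auto
  define J where "J k = {real_of_int k * h - \<delta> .. real_of_int k * h + h + \<delta>}" for k :: int
  define K where "K = {-\<lceil>(R + \<delta>) / h\<rceil>..\<lceil>(R + \<delta>) / h\<rceil>}"
  define \<S> where "\<S> = insert {x. R < \<bar>x\<bar>} (J ` K)"
  have "finite \<S>"
    by (simp add: \<S>_def K_def)
  have covered: "\<exists>S\<in>\<S>. {x. \<bar>x - \<mu>\<bar> < \<delta>} \<subseteq> S" for \<mu>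
  proof (cases "\<bar>\<mu>\<bar> < R + \<delta>")
    case True
    then have "J \<lfloor>\<mu> / h\<rfloor> \<in> \<S>"
      using floor_divide_in_bounded_range[OF \<open>h > 0\<close> True] by (simp add: \<S>_def K_def)
    then show ?thesis
      using ball_subset_grid_interval[OF \<open>h > 0\<close>] by (auto simp: J_def)
  qed (auto simp: \<S>_def)
  have "AE \<omega> in M. \<forall>S\<in>\<S>. eventually
          (\<lambda>n. real (card {i\<in>{1..n}. X i \<omega> \<in> S}) \<le> real n * c) sequentially"
  proof (rule AE_finite_allI[OF \<open>finite \<S>\<close>])
    fix S assume "S \<in> \<S>"
    then consider k where "S = J k" | "S = {x. R < \<bar>x\<bar>}"
      by (auto simp: \<S>_def)
    then show "AE \<omega> in M. eventually
          (\<lambda>n. real (card {i\<in>{1..n}. X i \<omega> \<in> S}) \<le> real n * c) sequentially"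
    proof cases
      case 1
      have prob_le: "measure M (X i -` S \<inter> space M) \<le> q * (2 * \<delta> + h)" for i
        using distributed_interval_le[OF dist g_le \<open>q \<ge> 0\<close>,
          of "real_of_int k * h - \<delta>" "real_of_int k * h + h + \<delta>"] \<open>h > 0\<close> \<open>\<delta> > 0\<close>
        by (simp add: 1 J_def algebra_simps)
      show ?thesis
        by (intro AE_eventually_card_le[OF ind _ prob_le \<open>q * (2 * \<delta> + h) < c\<close>]) (simp add: 1 J_def)
    next
      case 2
      have "S \<in> sets borel"
        unfolding 2 by measurable
      then have prob_le: "measure M (X i -` S \<inter> space M) \<le> measure M (X 0 -` S \<inter> space M)" for i
        using distributed_measure_eq[OF dist dist, of S i 0] by simp
      show ?thesis
        by (intro AE_eventually_card_le[OF ind _ prob_le R[folded 2]]) (simp add: 2)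
    qed
  qed
  then show ?thesis
  proof (rule AE_mp, intro AE_I2 impI)
    fix \<omega>
    assume "\<forall>S\<in>\<S>. eventually (\<lambda>n. real (card {i\<in>{1..n}. X i \<omega> \<in> S}) \<le> real n * c) sequentially"
    then have "eventually (\<lambda>n. \<forall>S\<in>\<S>. real (card {i\<in>{1..n}. X i \<omega> \<in> S}) \<le> real n * c) sequentially"
      using \<open>finite \<S>\<close> by (simp add: eventually_ball_finite)
    then obtain n0 where n0: "\<And>n S. n \<ge> n0 \<Longrightarrow> S \<in> \<S> \<Longrightarrow> real (card {i\<in>{1..n}. X i \<omega> \<in> S}) \<le> real n * c"
      by (auto simp: eventually_sequentially)
    have "(SUP \<mu>. real (card {i\<in>{1..n}. \<bar>X i \<omega> - \<mu>\<bar> < \<delta>})) \<le> real n * c" if "n \<ge> n0" for n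
    proof (rule cSUP_least)
      fix \<mu>
      obtain S where "S \<in> \<S>" and "{x. \<bar>x - \<mu>\<bar> < \<delta>} \<subseteq> S"
        using covered by blast
      then have "card {i\<in>{1..n}. \<bar>X i \<omega> - \<mu>\<bar> < \<delta>} \<le> card {i\<in>{1..n}. X i \<omega> \<in> S}"
        by (intro card_mono) auto
      then show "real (card {i\<in>{1..n}. \<bar>X i \<omega> - \<mu>\<bar> < \<delta>}) \<le> real n * c"
        using n0[OF that \<open>S \<in> \<S>\<close>] by linarith
    qed simp
    then show "\<exists>n0. \<forall>n\<ge>n0. (SUP \<mu>. real (card {i\<in>{1..n}. \<bar>X i \<omega> - \<mu>\<bar> < \<delta>})) \<le> real n * c"
      by blast
  qed
qed


theorem lemma1:
  fixes M :: "'s measure" and X :: "nat \<Rightarrow> 's \<Rightarrow> real"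
    and f0 :: "real \<Rightarrow> real" and m :: nat
    and \<alpha>0 \<mu>0 :: "nat \<Rightarrow> real" and \<sigma>0 :: real
    and v0 v1 \<beta> :: real
  assumes "prob_space M"
    and "m \<ge> 1"
    \<comment> \<open>f(.;0,1) is a probability density\<close>
    and "\<forall>x. f0 x \<ge> 0"
    and "has_bochner_integral lborel f0 1"
    \<comment> \<open>Condition C3 (|x|^{-beta} read as +infinity at x = 0)\<close>
    and "v0 > 0" and "v1 > 0" and "\<beta> > 1"
    and "\<forall>x. f0 x \<le> v0 \<and> (x \<noteq> 0 \<longrightarrow> f0 x \<le> v1 * \<bar>x\<bar> powr (-\<beta>))"
    \<comment> \<open>Condition C4\<close>
    and "continuous_on UNIV f0"
    \<comment> \<open>true parameters\<close>
    and "in_Psi_m m \<alpha>0" and "\<sigma>0 > 0"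
    \<comment> \<open>X_1, X_2, ... i.i.d. with density g(x;Psi_0,sigma_0)\<close>
    and "prob_space.indep_vars M (\<lambda>_. borel) X UNIV"
    and "\<forall>i. distributed M lborel (X i) (\<lambda>x. ennreal (mixdens f0 m \<alpha>0 \<mu>0 \<sigma>0 x))"
  shows "let a = (1 + \<beta>) / (2 * \<beta>);
             b = 2 * (\<beta> + 1) / (\<beta> - 1);
             \<epsilon>0 = (3 * real m * b * v0 / \<sigma>0) powr (- 1 / (1 - a))
         in AE \<omega> in M. \<exists>n0. \<forall>n\<ge>n0.
              (SUP \<mu>. real (card {i\<in>{1..n}. \<bar>X i \<omega> - \<mu>\<bar> < \<epsilon>0 powr (1 - a)}))
                \<le> real n / (real m * b)"
proof -
  interpret prob_space M by fact
  define a where "a = (1 + \<beta>) / (2 * \<beta>)"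
  define b where "b = 2 * (\<beta> + 1) / (\<beta> - 1)"
  define B where "B = 3 * real m * b * v0 / \<sigma>0"
  have "b > 0" and "1 - a > 0"
    using \<open>\<beta> > 1\<close> by (simp_all add: a_def b_def field_simps)
  then have "B > 0"
    using assms(2,5,11) by (simp add: B_def)
  have "(B powr (- 1 / (1 - a))) powr (1 - a) = B powr (- 1 / (1 - a) * (1 - a))"
    by (rule powr_powr)
  also have "- 1 / (1 - a) * (1 - a) = - 1"
    using \<open>1 - a > 0\<close> by simp
  finally have radius: "(B powr (- 1 / (1 - a))) powr (1 - a) = 1 / B"
    using \<open>B > 0\<close> by (simp add: powr_minus_divide)
  have "2 * (1 / B) * (v0 / \<sigma>0) < 1 / (real m * b)"
    using \<open>b > 0\<close> assms(2,5,11) by (simp add: B_def field_simps)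
  then have "AE \<omega> in M. \<exists>n0. \<forall>n\<ge>n0. (SUP \<mu>. real (card {i\<in>{1..n}. \<bar>X i \<omega> - \<mu>\<bar> < 1 / B}))
               \<le> real n * (1 / (real m * b))"
    using assms(5,8,11-13) \<open>B > 0\<close> mixdens_le[OF assms(10,11), of f0 v0 \<mu>0]
    by (intro AE_eventually_window_count_le[where g = "mixdens f0 m \<alpha>0 \<mu>0 \<sigma>0" and q = "v0 / \<sigma>0"])
      auto
  then show ?thesis
    unfolding Let_def a_def[symmetric] b_def[symmetric] B_def[symmetric] radius by simp
qed

end
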